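(* Let $H$ be a Hilbert space with inner product $\langle\cdot,\cdot\rangle$ and norm $\|\cdot\|$, let $T>0$, $\beta\in(0,1)$ and $g\in C^1([0,T];H)$. Then \[ \int_0^T \langle D_t^\beta g(t), g(t)\rangle\,dt \geq \frac{1/2}{\Gamma(1-\beta)}\int_0^T\left((T-t)^{-\beta}+t^{-\beta}\right)\|g(t)\|^2\,dt-\frac{1}{\Gamma(1-\beta)}\int_0^T t^{-\beta}\langle g(0),g(t)\rangle\,dt \] \[ \geq \frac{(T/2)^{-\beta}}{\Gamma(1-\beta)}\int_0^T\|g(t)\|^2\,dt-\frac{1}{\Gamma(1-\beta)}\int_0^T t^{-\beta}\langle g(0),g(t)\rangle\,dt. \]
   Context: $D_t^\beta$ denotes the Caputo fractional derivative of order $\beta\in(0,1)$: $D_t^\beta g(t)=\frac{1}{\Gamma(1-\beta)}\int_0^t (t-\tau)^{-\beta} g'(\tau)\,d\tau$. *)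

theory Defs
  imports "HOL-Analysis.Analysis"
begin

definition caputo :: "real \<Rightarrow> (real \<Rightarrow> 'a::real_normed_vector) \<Rightarrow> real \<Rightarrow> 'a" where
  "caputo \<beta> g t = (1 / Gamma (1 - \<beta>)) *\<^sub>R
     integral {0..t} (\<lambda>\<tau>. (t - \<tau>) powr (-\<beta>) *\<^sub>R vector_derivative g (at \<tau> within {0..t}))"

definition C1_on :: "real set \<Rightarrow> (real \<Rightarrow> 'a::real_normed_vector) \<Rightarrow> bool" where
  "C1_on S g \<longleftrightarrow> (\<exists>g'. (\<forall>t\<in>S. (g has_vector_derivative g' t) (at t within S)) \<and> continuous_on S g')"

end

(* With h = |g|^2, the identity 2 <g'(tau), g(t)> - h'(tau) = 2 <g'(tau), g(t) - g(tau)> and an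
   integration by parts of (t - tau)^(-beta) |g(t) - g(tau)|^2 over tau in [0, t] give the pointwise bound
     2 Gamma(1 - beta) <D^beta g(t), g(t)>  >=  Gamma(1 - beta) D^beta h(t) + t^(-beta) |g(t) - g(0)|^2:
   the boundary term at tau = t vanishes because g is Lipschitz, and the remaining integrand
   beta (t - tau)^(-beta - 1) |g(t) - g(tau)|^2 is nonnegative. Integrated over [0, T], the term
   Gamma(1 - beta) D^beta h becomes the integral of (T - tau)^(-beta) (h(tau) - h(0)); after expanding
   |g(t) - g(0)|^2 the h(0) terms cancel, since (T - t)^(-beta) and t^(-beta) have the same integral. The second is the convexity of x^(-beta):
   ((T - t)^(-beta) + t^(-beta)) / 2 >= (T / 2)^(-beta). *)

theory Submission
  imports Defs
begin

lemma has_integral_substitution_interior: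
  fixes f :: "real \<Rightarrow> 'a::banach"
  assumes "a \<le> b" and f: "continuous_on {c..d} f"
    and \<phi>: "continuous_on {a..b} \<phi>" "\<phi> ` {a..b} \<subseteq> {c..d}"
    and \<phi>': "\<And>x. x \<in> {a<..<b} \<Longrightarrow> (\<phi> has_real_derivative \<phi>' x) (at x)"
  shows "((\<lambda>x. \<phi>' x *\<^sub>R f (\<phi> x)) has_integral integral {c..\<phi> b} f - integral {c..\<phi> a} f) {a..b}"
proof -
  define F where "F x = integral {c..\<phi> x} f" for x
  have "continuous_on {a..b} F"
    unfolding F_def
    by (rule continuous_on_compose2[OF indefinite_integral_continuous_1 \<phi>])
      (use f in \<open>auto intro: integrable_continuous_real\<close>)
  moreover have "(F has_vector_derivative \<phi>' x *\<^sub>R f (\<phi> x)) (at x)" if "x \<in> {a<..<b}" for x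
  proof -
    have x: "\<phi> x \<in> {c..d}" and at_x: "at x within {a..b} = at x"
      using that \<phi>(2) by (auto simp: image_subset_iff intro!: at_within_Icc_at)
    have "((\<lambda>y. integral {c..y} f) has_vector_derivative f (\<phi> x)) (at (\<phi> x) within \<phi> ` {a..b})"
      by (rule has_vector_derivative_within_subset[OF integral_has_vector_derivative[OF f x] \<phi>(2)])
    moreover have "(\<phi> has_vector_derivative \<phi>' x) (at x within {a..b})"
      using \<phi>'[OF that] at_x by (simp add: has_real_derivative_iff_has_vector_derivative)
    ultimately have "((\<lambda>y. integral {c..y} f) \<circ> \<phi> has_vector_derivative \<phi>' x *\<^sub>R f (\<phi> x)) (at x)"
      using vector_diff_chain_within at_x by metis
    then show ?thesis
      by (simp add: F_def[abs_def] o_def)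
  qed
  ultimately have "((\<lambda>x. \<phi>' x *\<^sub>R f (\<phi> x)) has_integral F b - F a) {a..b}"
    by (intro fundamental_theorem_of_calculus_interior[OF \<open>a \<le> b\<close>]) auto
  then show ?thesis
    by (simp add: F_def)
qed

lemma mult_unit_interval_mem:
  fixes y c T :: real
  shows "y \<in> {0..T} \<Longrightarrow> c \<in> {0..1} \<Longrightarrow> y * c \<in> {0..T}"
  using mult_left_le[of c y] by auto

lemma one_minus_powr_mem_unit_interval:
  fixes s p :: real
  shows "0 < p \<Longrightarrow> s \<in> {0..1} \<Longrightarrow> 1 - s powr p \<in> {0..1}"
  by (auto intro: powr_le1)

section \<open>Abel's integral operator\<close>

text \<open>Gamma (1 - \<beta>) times the Riemann-Liouville integral of order 1 - \<beta>.\<close>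

definition abel_integral :: "real \<Rightarrow> (real \<Rightarrow> 'a::real_normed_vector) \<Rightarrow> real \<Rightarrow> 'a" where
  "abel_integral \<beta> f t = integral {0..t} (\<lambda>\<tau>. (t - \<tau>) powr (-\<beta>) *\<^sub>R f \<tau>)"

lemma caputo_eq_abel_integral:
  fixes g G :: "real \<Rightarrow> 'a::real_normed_vector"
  assumes g: "\<And>\<tau>. \<tau> \<in> {0..T} \<Longrightarrow> (g has_vector_derivative G \<tau>) (at \<tau> within {0..T})"
    and t: "t \<in> {0..T}"
  shows "caputo \<beta> g t = (1 / Gamma (1 - \<beta>)) *\<^sub>R abel_integral \<beta> G t"
proof (cases "t = 0")
  case False
  have "vector_derivative g (at \<tau> within {0..t}) = G \<tau>" if "\<tau> \<in> {0..t}" for \<tau>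
  proof -
    have "(g has_vector_derivative G \<tau>) (at \<tau> within {0..t})"
      using g[of \<tau>] that t by (auto intro: has_vector_derivative_within_subset)
    then show ?thesis
      using vector_derivative_within_cbox[of 0 t \<tau> g "G \<tau>"] False that t by auto
  qed
  then show ?thesis
    unfolding caputo_def abel_integral_def by (metis (no_types, lifting) integral_cong)
qed (simp add: caputo_def abel_integral_def)

text \<open>The substitution \<tau> = t (1 - s powr (1 / (1 - \<beta>))) removes the singularity of the
  kernel at \<tau> = t.\<close>

lemma has_integral_abel_kernel:
  fixes f :: "real \<Rightarrow> 'a::banach"
  assumes "\<beta> < 1" and "0 \<le> t" and f: "continuous_on {0..t} f"
  shows "((\<lambda>\<tau>. (t - \<tau>) powr (-\<beta>) *\<^sub>R f \<tau>) has_integral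
          (t powr (1 - \<beta>) / (1 - \<beta>)) *\<^sub>R integral {0..1} (\<lambda>s. f (t * (1 - s powr (1 / (1 - \<beta>)))))) {0..t}"
proof (cases "t = 0")
  case False
  then have t: "0 < t"
    using \<open>0 \<le> t\<close> by simp
  define a where "a = 1 - \<beta>"
  have a: "0 < a"
    using assms by (simp add: a_def)
  define \<phi> where "\<phi> \<tau> = ((t - \<tau>) / t) powr a" for \<tau>
  define \<phi>' where "\<phi>' \<tau> = - (a / t) * ((t - \<tau>) / t) powr (a - 1)" for \<tau>
  define f1 where "f1 s = f (t * (1 - s powr (1 / a)))" for s
  have "t * (1 - s powr (1 / a)) \<in> {0..t}" if "s \<in> {0..1}" for s
    using that t a by (intro mult_unit_interval_mem one_minus_powr_mem_unit_interval) auto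
  then have f1: "continuous_on {0..1} f1"
    unfolding f1_def using a
    by (intro continuous_on_compose2[OF f] continuous_intros continuous_on_powr') auto
  have "\<phi> ` {0..t} \<subseteq> {0..1}"
    unfolding \<phi>_def using t a by (auto intro!: powr_le1 simp: divide_simps)
  moreover have "continuous_on {0..t} \<phi>"
    unfolding \<phi>_def using t a by (intro continuous_intros continuous_on_powr') auto
  moreover have "(\<phi> has_real_derivative \<phi>' \<tau>) (at \<tau>)" if "\<tau> \<in> {0<..<t}" for \<tau>
    unfolding \<phi>_def \<phi>'_def using that t by (auto intro!: derivative_eq_intros simp: field_simps)
  ultimately have "((\<lambda>\<tau>. \<phi>' \<tau> *\<^sub>R f1 (\<phi> \<tau>)) has_integral integral {0..\<phi> t} f1 - integral {0..\<phi> 0} f1) {0..t}"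
    using t by (intro has_integral_substitution_interior[OF _ f1]) auto
  then have "((\<lambda>\<tau>. \<phi>' \<tau> *\<^sub>R f1 (\<phi> \<tau>)) has_integral - integral {0..1} f1) {0..t}"
    using t a by (simp add: \<phi>_def)
  from has_integral_cmul[OF this, of "- (t powr a / a)"]
  have "((\<lambda>\<tau>. (- (t powr a / a) * \<phi>' \<tau>) *\<^sub>R f1 (\<phi> \<tau>)) has_integral (t powr a / a) *\<^sub>R integral {0..1} f1) {0..t}"
    by simp
  then have "((\<lambda>\<tau>. (t - \<tau>) powr (-\<beta>) *\<^sub>R f \<tau>) has_integral (t powr a / a) *\<^sub>R integral {0..1} f1) {0..t}"
  proof (rule has_integral_spike_finite[of "{0, t}", rotated 2])
    fix \<tau> assume "\<tau> \<in> {0..t} - {0, t}"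
    then have \<tau>: "0 < \<tau>" "\<tau> < t"
      by auto
    have "\<phi> \<tau> powr (1 / a) = (t - \<tau>) / t"
      using \<tau> a by (simp add: \<phi>_def powr_powr)
    then have "t * (1 - \<phi> \<tau> powr (1 / a)) = \<tau>"
      using t by (simp add: field_simps)
    then have "f1 (\<phi> \<tau>) = f \<tau>"
      by (simp add: f1_def)
    moreover have "- (t powr a / a) * \<phi>' \<tau> = (t - \<tau>) powr (-\<beta>)"
      unfolding \<phi>'_def using \<tau> a by (simp add: powr_divide powr_diff a_def field_simps powr_minus)
    ultimately show "(t - \<tau>) powr (-\<beta>) *\<^sub>R f \<tau> = (- (t powr a / a) * \<phi>' \<tau>) *\<^sub>R f1 (\<phi> \<tau>)"
      by simp
  qed simp
  then show ?thesis
    by (simp add: a_def f1_def[abs_def])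
qed (simp add: has_integral_refl)

lemma continuous_on_abel_integral_banach:
  fixes f :: "real \<Rightarrow> 'a::banach"
  assumes "\<beta> < 1" and f: "continuous_on {0..T} f"
  shows "continuous_on {0..T} (abel_integral \<beta> f)"
proof -
  define c where "c s = 1 - s powr (1 / (1 - \<beta>))" for s
  have c: "continuous_on {0..1} c"
    unfolding c_def using assms by (intro continuous_intros continuous_on_powr') auto
  have "t * c s \<in> {0..T}" if "t \<in> {0..T}" "s \<in> {0..1}" for t s
    unfolding c_def using that assms by (intro mult_unit_interval_mem one_minus_powr_mem_unit_interval) auto
  then have "continuous_on ({0..T} \<times> {0..1}) (\<lambda>(t, s). f (t * c s))"
    unfolding split_beta
    by (intro continuous_on_compose2[OF f] continuous_intros continuous_on_compose2[OF c]) auto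
  from integral_continuous_on_param[OF this[folded cbox_interval]]
  have "continuous_on {0..T} (\<lambda>t. (t powr (1 - \<beta>) / (1 - \<beta>)) *\<^sub>R integral {0..1} (\<lambda>s. f (t * c s)))"
    using assms by (intro continuous_intros continuous_on_powr') (auto simp: cbox_interval)
  then show ?thesis
  proof (rule continuous_on_eq)
    fix t assume "t \<in> {0..T}"
    then show "(t powr (1 - \<beta>) / (1 - \<beta>)) *\<^sub>R integral {0..1} (\<lambda>s. f (t * c s)) = abel_integral \<beta> f t"
      using has_integral_abel_kernel[OF \<open>\<beta> < 1\<close> _ continuous_on_subset[OF f]]
      by (auto simp: abel_integral_def c_def intro!: integral_unique[symmetric])
  qed
qed

section \<open>Complete normed spaces as Banach spaces\<close>

text \<open>The sort {real_normed_vector, complete_space} is not a subsort of banach, although both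
  have the same axioms. A copy of the type carries the banach instance, and the integration theory
  of the library is transported back along the isometry vec_of.\<close>

typedef 'a banach_copy = "UNIV :: 'a::{real_normed_vector, complete_space} set"
  morphisms vec_of banach_copy
  by simp

setup_lifting type_definition_banach_copy

instantiation banach_copy :: ("{real_normed_vector, complete_space}") real_normed_vector
begin

lift_definition zero_banach_copy :: "'a banach_copy" is 0 .
lift_definition plus_banach_copy :: "'a banach_copy \<Rightarrow> 'a banach_copy \<Rightarrow> 'a banach_copy" is "(+)" .
lift_definition minus_banach_copy :: "'a banach_copy \<Rightarrow> 'a banach_copy \<Rightarrow> 'a banach_copy" is "(-)" .
lift_definition uminus_banach_copy :: "'a banach_copy \<Rightarrow> 'a banach_copy" is uminus .
lift_definition scaleR_banach_copy :: "real \<Rightarrow> 'a banach_copy \<Rightarrow> 'a banach_copy" is scaleR .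
lift_definition norm_banach_copy :: "'a banach_copy \<Rightarrow> real" is norm .
lift_definition sgn_banach_copy :: "'a banach_copy \<Rightarrow> 'a banach_copy" is sgn .
lift_definition dist_banach_copy :: "'a banach_copy \<Rightarrow> 'a banach_copy \<Rightarrow> real" is dist .

definition uniformity_banach_copy :: "('a banach_copy \<times> 'a banach_copy) filter" where
  "uniformity_banach_copy = (INF e\<in>{0<..}. principal {(x, y). dist x y < e})"

definition open_banach_copy :: "'a banach_copy set \<Rightarrow> bool" where
  "open_banach_copy U = (\<forall>x\<in>U. eventually (\<lambda>(x', y). x' = x \<longrightarrow> y \<in> U) uniformity)"

instance
proof
  fix x y z :: "'a banach_copy" and a b :: real and U :: "'a banach_copy set"
  show "x + y + z = x + (y + z)" by transfer (rule add.assoc)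
  show "x + y = y + x" by transfer (rule add.commute)
  show "0 + x = x" by transfer simp
  show "- x + x = 0" by transfer simp
  show "x - y = x + - y" by transfer simp
  show "a *\<^sub>R (x + y) = a *\<^sub>R x + a *\<^sub>R y" by transfer (rule scaleR_add_right)
  show "(a + b) *\<^sub>R x = a *\<^sub>R x + b *\<^sub>R x" by transfer (rule scaleR_add_left)
  show "a *\<^sub>R b *\<^sub>R x = (a * b) *\<^sub>R x" by transfer simp
  show "1 *\<^sub>R x = x" by transfer simp
  show "uniformity = (INF e\<in>{0<..}. principal {(x, y). dist (x::'a banach_copy) y < e})"
    by (simp add: uniformity_banach_copy_def)
  show "open U = (\<forall>x\<in>U. \<forall>\<^sub>F (x', y) in uniformity. x' = x \<longrightarrow> y \<in> U)"
    by (simp add: open_banach_copy_def)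
  show "dist x y = norm (x - y)" by transfer (rule dist_norm)
  show "sgn x = inverse (norm x) *\<^sub>R x" by transfer (rule sgn_div_norm)
  show "(norm x = 0) = (x = 0)" by transfer simp
  show "norm (x + y) \<le> norm x + norm y" by transfer (rule norm_triangle_ineq)
  show "norm (a *\<^sub>R x) = \<bar>a\<bar> * norm x" by transfer simp
qed

end

instance banach_copy :: ("{real_normed_vector, complete_space}") banach
proof
  fix X :: "nat \<Rightarrow> 'a banach_copy"
  assume "Cauchy X"
  then have "Cauchy (\<lambda>n. vec_of (X n))"
    by (simp add: Cauchy_def dist_banach_copy.rep_eq)
  then obtain L where "(\<lambda>n. vec_of (X n)) \<longlonglongrightarrow> L"
    using Cauchy_convergent_iff convergent_def by blast
  then have "X \<longlonglongrightarrow> banach_copy L"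
    unfolding lim_sequentially by (simp add: dist_banach_copy.rep_eq banach_copy_inverse)
  then show "convergent X"
    by (auto simp: convergent_def)
qed

lemma bounded_linear_vec_of: "bounded_linear vec_of"
  by (rule bounded_linear_intro[where K = 1]) (transfer, simp)+

lemma continuous_on_banach_copy: "continuous_on S f \<Longrightarrow> continuous_on S (\<lambda>x. banach_copy (f x))"
  unfolding continuous_on_def tendsto_iff by (simp add: dist_banach_copy.abs_eq)

lemma abel_integral_banach_copy:
  fixes f :: "real \<Rightarrow> 'a::{real_normed_vector, complete_space}"
  assumes "\<beta> < 1" and "0 \<le> t" and "continuous_on {0..t} f"
  shows "((\<lambda>\<tau>. (t - \<tau>) powr (-\<beta>) *\<^sub>R f \<tau>) has_integral
           vec_of (abel_integral \<beta> (\<lambda>\<tau>. banach_copy (f \<tau>)) t)) {0..t}"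
proof -
  have "((\<lambda>\<tau>. (t - \<tau>) powr (-\<beta>) *\<^sub>R banach_copy (f \<tau>)) has_integral
          abel_integral \<beta> (\<lambda>\<tau>. banach_copy (f \<tau>)) t) {0..t}"
    unfolding abel_integral_def
    using has_integral_abel_kernel[OF assms(1,2) continuous_on_banach_copy[OF assms(3)]]
    by (auto intro: integrable_integral)
  from has_integral_linear[OF this bounded_linear_vec_of]
  show ?thesis
    by (simp add: o_def scaleR_banach_copy.rep_eq banach_copy_inverse)
qed

lemma has_integral_abel_integral:
  fixes f :: "real \<Rightarrow> 'a::{real_normed_vector, complete_space}"
  assumes "\<beta> < 1" and "0 \<le> t" and "continuous_on {0..t} f"
  shows "((\<lambda>\<tau>. (t - \<tau>) powr (-\<beta>) *\<^sub>R f \<tau>) has_integral abel_integral \<beta> f t) {0..t}"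
  using abel_integral_banach_copy[OF assms] unfolding abel_integral_def
  by (auto intro: integrable_integral)

lemma continuous_on_abel_integral:
  fixes f :: "real \<Rightarrow> 'a::{real_normed_vector, complete_space}"
  assumes "\<beta> < 1" and f: "continuous_on {0..T} f"
  shows "continuous_on {0..T} (abel_integral \<beta> f)"
proof -
  have "continuous_on {0..T} (\<lambda>t. vec_of (abel_integral \<beta> (\<lambda>\<tau>. banach_copy (f \<tau>)) t))"
    by (intro continuous_on_compose2[OF linear_continuous_on[OF bounded_linear_vec_of]]
        continuous_on_abel_integral_banach[OF \<open>\<beta> < 1\<close> continuous_on_banach_copy[OF f]]) auto
  then show ?thesis
  proof (rule continuous_on_eq)
    fix t assume "t \<in> {0..T}"
    then show "vec_of (abel_integral \<beta> (\<lambda>\<tau>. banach_copy (f \<tau>)) t) = abel_integral \<beta> f t"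
      using abel_integral_banach_copy[OF \<open>\<beta> < 1\<close> _ continuous_on_subset[OF f]]
      by (auto simp: abel_integral_def intro!: integral_unique[symmetric])
  qed
qed

lemma integrable_on_powr_mult_continuous:
  fixes f :: "real \<Rightarrow> 'a::banach"
  assumes "\<beta> < 1" and "0 \<le> T" and "continuous_on {0..T} f"
  shows "(\<lambda>t. t powr (-\<beta>) *\<^sub>R f t) integrable_on {0..T}"
proof -
  have "continuous_on {0..T} (\<lambda>\<tau>. f (T - \<tau>))"
    by (rule continuous_on_compose2[OF assms(3)]) (auto intro!: continuous_intros)
  from has_integral_abel_kernel[OF assms(1,2) this]
  have "(\<lambda>\<tau>. (T - \<tau>) powr (-\<beta>) *\<^sub>R f (T - \<tau>)) integrable_on cbox 0 T"
    by (auto simp: cbox_interval)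
  from integrable_affinity[OF this, of "-1" T]
  show ?thesis
    using \<open>0 \<le> T\<close> by (simp add: cbox_interval image_affinity_atLeastAtMost[where m = "-1", simplified])
qed

section \<open>Integrating the Abel integral\<close>

lemma integral_comp_one_minus_powr:
  fixes \<Psi> \<psi> :: "real \<Rightarrow> real"
  assumes "0 < p" and "0 < x" and "x \<le> T"
    and \<Psi>: "\<And>\<tau>. \<tau> \<in> {0..T} \<Longrightarrow> (\<Psi> has_real_derivative \<psi> \<tau>) (at \<tau> within {0..T})"
    and \<psi>: "continuous_on {0..T} \<psi>" and "\<Psi> 0 = 0"
  shows "integral {0..1} (\<lambda>s. \<Psi> (x * (1 - s powr p)))
           = x * p * integral {0..1} (\<lambda>s. s powr p * \<psi> (x * (1 - s powr p)))"
proof -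
  define y where "y s = x * (1 - s powr p)" for s
  have y: "y s \<in> {0..T}" if "s \<in> {0..1}" for s
    unfolding y_def using that assms by (intro mult_unit_interval_mem one_minus_powr_mem_unit_interval) auto
  have "continuous_on {0..1} y"
    unfolding y_def using \<open>0 < p\<close> by (intro continuous_intros continuous_on_powr') auto
  then have \<Psi>y: "continuous_on {0..1} (\<lambda>s. \<Psi> (y s))" and \<psi>y: "continuous_on {0..1} (\<lambda>s. \<psi> (y s))"
    using y by (auto intro!: continuous_on_compose2[OF DERIV_continuous_on[OF \<Psi>]] continuous_on_compose2[OF \<psi>])
  have "((\<lambda>s. s * \<Psi> (y s)) has_vector_derivative \<Psi> (y s) - x * p * (s powr p * \<psi> (y s))) (at s)"
    if s: "s \<in> {0<..<1}" for s
  proof -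
    have "s powr p < 1"
      using s powr_less_mono2[OF \<open>0 < p\<close>, of s 1] by simp
    then have "0 < y s" and "y s < x * 1"
      using s \<open>0 < x\<close> unfolding y_def by (auto intro!: mult_strict_left_mono)
    then have "y s \<in> {0<..<T}"
      using \<open>x \<le> T\<close> by simp
    then have "(\<Psi> has_real_derivative \<psi> (y s)) (at (y s))"
      using \<Psi>[of "y s"] at_within_Icc_at[of 0 "y s" T] by auto
    moreover have "(y has_real_derivative - x * p * s powr (p - 1)) (at s)"
      unfolding y_def[abs_def] using s by (auto intro!: derivative_eq_intros)
    ultimately have "((\<lambda>s. s * \<Psi> (y s)) has_real_derivative \<Psi> (y s) + s * (\<psi> (y s) * (- x * p * s powr (p - 1)))) (at s)"
      by (auto intro!: derivative_eq_intros DERIV_chain2[of \<Psi>])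
    moreover have "\<Psi> (y s) + s * (\<psi> (y s) * (- x * p * s powr (p - 1)))
                     = \<Psi> (y s) - x * p * (s powr p * \<psi> (y s))"
      using s by (simp add: powr_diff field_simps)
    ultimately show ?thesis
      unfolding has_real_derivative_iff_has_vector_derivative[symmetric] by (rule DERIV_cong)
  qed
  then have "((\<lambda>s. \<Psi> (y s) - x * p * (s powr p * \<psi> (y s))) has_integral 1 * \<Psi> (y 1) - 0 * \<Psi> (y 0)) {0..1}"
    using \<Psi>y by (intro fundamental_theorem_of_calculus_interior) (auto intro!: continuous_intros)
  then have "integral {0..1} (\<lambda>s. \<Psi> (y s) - x * p * (s powr p * \<psi> (y s))) = 0"
    using \<open>\<Psi> 0 = 0\<close> by (simp add: y_def integral_unique)
  moreover have "(\<lambda>s. x * p * (s powr p * \<psi> (y s))) integrable_on {0..1}"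
    using \<open>0 < p\<close> by (intro integrable_continuous_real continuous_intros continuous_on_powr' \<psi>y) auto
  ultimately show ?thesis
    using integral_diff[OF integrable_continuous_real[OF \<Psi>y]] by (simp add: y_def)
qed

lemma has_real_derivative_integral_comp_mult:
  fixes \<Psi> \<psi> c :: "real \<Rightarrow> real"
  assumes \<Psi>: "\<And>\<tau>. \<tau> \<in> {0..T} \<Longrightarrow> (\<Psi> has_real_derivative \<psi> \<tau>) (at \<tau> within {0..T})"
    and \<psi>: "continuous_on {0..T} \<psi>"
    and c: "continuous_on {0..1} c" "c ` {0..1} \<subseteq> {0..1}"
    and "x \<in> {0..T}"
  shows "((\<lambda>y. integral {0..1} (\<lambda>s. \<Psi> (y * c s))) has_real_derivative
           integral {0..1} (\<lambda>s. c s * \<psi> (x * c s))) (at x within {0..T})"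
proof -
  have yc: "y * c s \<in> {0..T}" if "y \<in> {0..T}" "s \<in> {0..1}" for y s
    using that c(2) by (intro mult_unit_interval_mem) (auto simp: image_subset_iff)
  have "((\<lambda>y. integral (cbox 0 (1::real)) (\<lambda>s. \<Psi> (y * c s))) has_real_derivative
          integral (cbox 0 1) (\<lambda>s. c s * \<psi> (x * c s))) (at x within {0..T})"
  proof (rule leibniz_rule_field_derivative, unfold cbox_interval)
    fix y s :: real assume "y \<in> {0..T}" and "s \<in> {0..1}"
    have "((\<lambda>y. y * c s) has_real_derivative c s) (at y within {0..T})"
      by (auto intro!: derivative_eq_intros)
    moreover have "(\<Psi> has_real_derivative \<psi> (y * c s)) (at (y * c s) within (\<lambda>y. y * c s) ` {0..T})"
      by (rule DERIV_subset[OF \<Psi>[OF yc[OF \<open>y \<in> {0..T}\<close> \<open>s \<in> {0..1}\<close>]]])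
        (use yc \<open>s \<in> {0..1}\<close> in auto)
    ultimately show "((\<lambda>y. \<Psi> (y * c s)) has_real_derivative c s * \<psi> (y * c s)) (at y within {0..T})"
      using DERIV_image_chain by (fastforce simp: o_def mult.commute)
  next
    fix y assume "y \<in> {0..T}"
    then show "(\<lambda>s. \<Psi> (y * c s)) integrable_on {0..1}"
      using yc by (intro integrable_continuous_real continuous_on_compose2[OF DERIV_continuous_on[OF \<Psi>]]
          continuous_intros c(1)) auto
  next
    show "continuous_on ({0..T} \<times> {0..1}) (\<lambda>(y, s). c s * \<psi> (y * c s))"
      unfolding split_beta using yc
      by (intro continuous_intros continuous_on_compose2[OF c(1)] continuous_on_compose2[OF \<psi>]) auto
  qed (use \<open>x \<in> {0..T}\<close> in auto)
  then show ?thesis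
    by (simp add: cbox_interval)
qed

lemma has_real_derivative_powr_mult_integral_comp:
  fixes \<Psi> \<psi> :: "real \<Rightarrow> real"
  assumes "0 < a"
    and \<Psi>: "\<And>\<tau>. \<tau> \<in> {0..T} \<Longrightarrow> (\<Psi> has_real_derivative \<psi> \<tau>) (at \<tau> within {0..T})"
    and \<psi>: "continuous_on {0..T} \<psi>" and "\<Psi> 0 = 0" and x: "x \<in> {0<..<T}"
  shows "((\<lambda>y. (y powr a / a) * integral {0..1} (\<lambda>s. \<Psi> (y * (1 - s powr (1 / a))))) has_real_derivative
           (x powr a / a) * integral {0..1} (\<lambda>s. \<psi> (x * (1 - s powr (1 / a))))) (at x)"
proof -
  define p where "p = 1 / a"
  have "0 < p"
    using \<open>0 < a\<close> by (simp add: p_def)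
  define c where "c s = 1 - s powr p" for s
  have c: "continuous_on {0..1} c" "c ` {0..1} \<subseteq> {0..1}"
    unfolding c_def using \<open>0 < p\<close> one_minus_powr_mem_unit_interval
    by (auto intro!: continuous_intros continuous_on_powr')
  define Q where "Q f y = integral {0..1} (\<lambda>s. f (y * c s))" for f :: "real \<Rightarrow> real" and y
  define S where "S = integral {0..1} (\<lambda>s. s powr p * \<psi> (x * c s))"
  define D where "D = integral {0..1} (\<lambda>s. c s * \<psi> (x * c s))"
  have "(Q \<Psi> has_real_derivative D) (at x within {0..T})"
    unfolding Q_def[abs_def] D_def using x by (intro has_real_derivative_integral_comp_mult[OF \<Psi> \<psi> c]) auto
  then have "(Q \<Psi> has_real_derivative D) (at x)"
    using x at_within_Icc_at[of 0 x T] by simp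
  moreover have "((\<lambda>y. y powr a / a) has_real_derivative x powr (a - 1)) (at x)"
    using x \<open>0 < a\<close> by (auto intro!: derivative_eq_intros)
  ultimately have "((\<lambda>y. (y powr a / a) * Q \<Psi> y) has_real_derivative
                      x powr (a - 1) * Q \<Psi> x + (x powr a / a) * D) (at x)"
    using DERIV_mult by (fastforce simp: mult.commute)
  moreover have "Q \<Psi> x = x * p * S"
    unfolding Q_def S_def c_def using x \<open>0 < p\<close>
    by (intro integral_comp_one_minus_powr[OF _ _ _ \<Psi> \<psi> \<open>\<Psi> 0 = 0\<close>]) auto
  moreover have "Q \<psi> x = S + D"
  proof -
    have "x * c s \<in> {0..T}" if "s \<in> {0..1}" for s
      using that c(2) x by (intro mult_unit_interval_mem) (auto simp: image_subset_iff)
    then have "continuous_on {0..1} (\<lambda>s. \<psi> (x * c s))"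
      by (intro continuous_on_compose2[OF \<psi>] continuous_intros c(1)) auto
    then have "S + D = integral {0..1} (\<lambda>s. s powr p * \<psi> (x * c s) + c s * \<psi> (x * c s))"
      unfolding S_def D_def using \<open>0 < p\<close> c
      by (intro integral_add[symmetric] integrable_continuous_real continuous_intros continuous_on_powr') auto
    then show ?thesis
      by (simp add: Q_def c_def algebra_simps)
  qed
  moreover have "x powr (a - 1) * (x * p) = x powr a / a"
    using x by (simp add: p_def powr_diff field_simps)
  ultimately show ?thesis
    using \<open>0 < a\<close> by (simp add: Q_def c_def p_def algebra_simps add_divide_distrib)
qed

lemma has_real_derivative_abel_integral:
  fixes \<Psi> \<psi> :: "real \<Rightarrow> real"
  assumes "\<beta> < 1"
    and \<Psi>: "\<And>\<tau>. \<tau> \<in> {0..T} \<Longrightarrow> (\<Psi> has_real_derivative \<psi> \<tau>) (at \<tau> within {0..T})"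
    and \<psi>: "continuous_on {0..T} \<psi>" and "\<Psi> 0 = 0" and x: "x \<in> {0<..<T}"
  shows "(abel_integral \<beta> \<Psi> has_real_derivative abel_integral \<beta> \<psi> x) (at x)"
proof -
  define a where "a = 1 - \<beta>"
  have abel: "abel_integral \<beta> f y = (y powr a / a) * integral {0..1} (\<lambda>s. f (y * (1 - s powr (1 / a))))"
    if "continuous_on {0..T} f" "y \<in> {0..T}" for f y
    using has_integral_abel_kernel[OF \<open>\<beta> < 1\<close> _ continuous_on_subset[OF that(1)], of y] that
    by (auto simp: abel_integral_def a_def intro!: integral_unique)
  have "0 < a"
    using \<open>\<beta> < 1\<close> by (simp add: a_def)
  from has_real_derivative_powr_mult_integral_comp[OF this \<Psi> \<psi> \<open>\<Psi> 0 = 0\<close> x]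
  have "((\<lambda>y. (y powr a / a) * integral {0..1} (\<lambda>s. \<Psi> (y * (1 - s powr (1 / a))))) has_real_derivative
          abel_integral \<beta> \<psi> x) (at x)"
    using abel[OF \<psi>] x by simp
  then show ?thesis
    by (rule has_field_derivative_transform_within_open[of _ _ _ "{0<..<T}"])
      (use x abel[OF DERIV_continuous_on[OF \<Psi>]] in auto)
qed

text \<open>Fubini's theorem for the Abel kernel, proved by differentiating in the upper limit
  instead of exchanging the integrals.\<close>

lemma abel_integral_deriv_has_integral:
  fixes h h' :: "real \<Rightarrow> real"
  assumes "\<beta> < 1" and "0 \<le> T"
    and h: "\<And>\<tau>. \<tau> \<in> {0..T} \<Longrightarrow> (h has_real_derivative h' \<tau>) (at \<tau> within {0..T})"
    and h': "continuous_on {0..T} h'"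
  shows "(abel_integral \<beta> h' has_integral abel_integral \<beta> h T - h 0 * (T powr (1 - \<beta>) / (1 - \<beta>))) {0..T}"
proof -
  define \<Psi> where "\<Psi> \<tau> = h \<tau> - h 0" for \<tau>
  have \<Psi>: "(\<Psi> has_real_derivative h' \<tau>) (at \<tau> within {0..T})" if "\<tau> \<in> {0..T}" for \<tau>
    unfolding \<Psi>_def using h[OF that] by (auto intro!: derivative_eq_intros)
  have "(abel_integral \<beta> h' has_integral abel_integral \<beta> \<Psi> T - abel_integral \<beta> \<Psi> 0) {0..T}"
  proof (rule fundamental_theorem_of_calculus_interior[OF \<open>0 \<le> T\<close>])
    show "continuous_on {0..T} (abel_integral \<beta> \<Psi>)"
      by (rule continuous_on_abel_integral[OF \<open>\<beta> < 1\<close> DERIV_continuous_on[OF \<Psi>]])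
    show "(abel_integral \<beta> \<Psi> has_vector_derivative abel_integral \<beta> h' x) (at x)" if "x \<in> {0<..<T}" for x
      using has_real_derivative_abel_integral[OF \<open>\<beta> < 1\<close> \<Psi> h' _ that]
      by (simp add: \<Psi>_def has_real_derivative_iff_has_vector_derivative)
  qed
  moreover have "abel_integral \<beta> \<Psi> T = abel_integral \<beta> h T - h 0 * (T powr (1 - \<beta>) / (1 - \<beta>))"
  proof -
    have "((\<lambda>\<tau>. (T - \<tau>) powr (-\<beta>) * h \<tau>) has_integral abel_integral \<beta> h T) {0..T}"
      using has_integral_abel_integral[OF \<open>\<beta> < 1\<close> \<open>0 \<le> T\<close> DERIV_continuous_on[OF h]] by simp
    moreover have "((\<lambda>\<tau>. (T - \<tau>) powr (-\<beta>)) has_integral T powr (1 - \<beta>) / (1 - \<beta>)) {0..T}"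
      using has_integral_abel_kernel[OF \<open>\<beta> < 1\<close> \<open>0 \<le> T\<close>, of "\<lambda>_. 1::real"] by simp
    ultimately have "((\<lambda>\<tau>. (T - \<tau>) powr (-\<beta>) * h \<tau> - h 0 * (T - \<tau>) powr (-\<beta>)) has_integral
                       abel_integral \<beta> h T - h 0 * (T powr (1 - \<beta>) / (1 - \<beta>))) {0..T}"
      by (intro has_integral_diff has_integral_mult_right)
    then have "((\<lambda>\<tau>. (T - \<tau>) powr (-\<beta>) * \<Psi> \<tau>) has_integral
                 abel_integral \<beta> h T - h 0 * (T powr (1 - \<beta>) / (1 - \<beta>))) {0..T}"
      by (simp add: \<Psi>_def algebra_simps)
    then show ?thesis
      by (simp add: abel_integral_def integral_unique)
  qed
  ultimately show ?thesis
    by (simp add: abel_integral_def)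
qed

section \<open>The pointwise inequality\<close>

lemma norm_diff_le_of_vector_derivative_bound:
  fixes g G :: "real \<Rightarrow> 'a::real_normed_vector"
  assumes g: "\<And>\<tau>. \<tau> \<in> {a..b} \<Longrightarrow> (g has_vector_derivative G \<tau>) (at \<tau> within {a..b})"
    and M: "\<And>\<tau>. \<tau> \<in> {a..b} \<Longrightarrow> norm (G \<tau>) \<le> M"
    and "x \<in> {a..b}" and "y \<in> {a..b}"
  shows "norm (g x - g y) \<le> M * \<bar>x - y\<bar>"
proof -
  have "norm (g x - g y) \<le> M * norm (x - y)"
  proof (rule differentiable_bound[of "{a..b}" g "\<lambda>\<tau> h. h *\<^sub>R G \<tau>"])
    show "(g has_derivative (\<lambda>h. h *\<^sub>R G \<tau>)) (at \<tau> within {a..b})" if "\<tau> \<in> {a..b}" for \<tau>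
      using g[OF that] by (simp add: has_vector_derivative_def)
    show "onorm (\<lambda>h. h *\<^sub>R G \<tau>) \<le> M" if "\<tau> \<in> {a..b}" for \<tau>
      using onorm_scaleR_left[OF bounded_linear_ident, of "G \<tau>"] M[OF that] by (simp add: onorm_id)
  qed (use assms in auto)
  then show ?thesis
    by simp
qed

lemma continuous_on_powr_mult_norm_diff_sq:
  fixes g :: "real \<Rightarrow> 'a::real_normed_vector"
  assumes "\<beta> < 2" and g: "continuous_on {a..t} g"
    and lip: "\<And>\<tau>. \<tau> \<in> {a..t} \<Longrightarrow> norm (g t - g \<tau>) \<le> M * (t - \<tau>)"
  shows "continuous_on {a..t} (\<lambda>\<tau>. (t - \<tau>) powr (-\<beta>) * (norm (g t - g \<tau>))\<^sup>2)"
    (is "continuous_on _ ?\<Psi>")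
  unfolding continuous_on_def
proof
  fix \<tau> assume \<tau>: "\<tau> \<in> {a..t}"
  show "(?\<Psi> \<longlongrightarrow> ?\<Psi> \<tau>) (at \<tau> within {a..t})"
  proof (cases "\<tau> = t")
    case False
    then have "0 < t - \<tau>"
      using \<tau> by auto
    then have "((\<lambda>x. (t - x) powr (-\<beta>)) \<longlongrightarrow> (t - \<tau>) powr (-\<beta>)) (at \<tau> within {a..t})"
      by (intro tendsto_intros) auto
    moreover have "(g \<longlongrightarrow> g \<tau>) (at \<tau> within {a..t})"
      using g \<tau> by (simp add: continuous_on_def)
    ultimately show ?thesis
      by (intro tendsto_mult tendsto_power tendsto_norm tendsto_diff tendsto_const)
  next
    case True
    have "?\<Psi> x \<le> M\<^sup>2 * (t - x) powr (2 - \<beta>)" if "x \<in> {a..t}" "x \<noteq> t" for x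
    proof -
      have "0 < t - x"
        using that by auto
      have "(norm (g t - g x))\<^sup>2 \<le> (M * (t - x))\<^sup>2"
        using lip[OF that(1)] by (intro power_mono) auto
      then have "?\<Psi> x \<le> (t - x) powr (-\<beta>) * (M * (t - x))\<^sup>2"
        by (intro mult_left_mono) auto
      also have "\<dots> = M\<^sup>2 * ((t - x) powr 2 * (t - x) powr (-\<beta>))"
        using \<open>0 < t - x\<close> by (simp add: power_mult_distrib powr_numeral)
      also have "\<dots> = M\<^sup>2 * (t - x) powr (2 - \<beta>)"
        by (simp add: powr_add[symmetric])
      finally show ?thesis .
    qed
    then have upper: "\<forall>\<^sub>F x in at t within {a..t}. ?\<Psi> x \<le> M\<^sup>2 * (t - x) powr (2 - \<beta>)"
      by (auto simp: eventually_at_filter)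
    have lower: "\<forall>\<^sub>F x in at t within {a..t}. 0 \<le> ?\<Psi> x"
      by (intro always_eventually) simp
    have "((\<lambda>x. M\<^sup>2 * (t - x) powr (2 - \<beta>)) \<longlongrightarrow> M\<^sup>2 * (t - t) powr (2 - \<beta>)) (at t within {a..t})"
      using \<open>\<beta> < 2\<close> by (intro tendsto_intros) (auto simp: eventually_at_filter)
    then have "((\<lambda>x. M\<^sup>2 * (t - x) powr (2 - \<beta>)) \<longlongrightarrow> 0) (at t within {a..t})"
      by simp
    from real_tendsto_sandwich[OF lower upper tendsto_const this]
    have "(?\<Psi> \<longlongrightarrow> 0) (at t within {a..t})" .
    then show ?thesis
      using True by simp
  qed
qed

lemma has_real_derivative_power2_norm:
  fixes u :: "real \<Rightarrow> 'a::real_inner"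
  assumes "(u has_vector_derivative u') (at x within S)"
  shows "((\<lambda>x. (norm (u x))\<^sup>2) has_real_derivative 2 * inner u' (u x)) (at x within S)"
proof -
  from assms have "(u has_derivative (\<lambda>h. h *\<^sub>R u')) (at x within S)"
    by (simp add: has_vector_derivative_def)
  from has_derivative_inner[OF this this]
  show ?thesis
    unfolding has_field_derivative_def power2_norm_eq_inner
    by (rule has_derivative_eq_rhs) (auto simp: fun_eq_iff inner_commute algebra_simps)
qed

text \<open>Integrate the derivative of \<Psi> \<tau> = (t - \<tau>)^(-\<beta>) |g t - g \<tau>|^2 over [0, t]: \<Psi> t = 0 by
  the Lipschitz bound on g, and the part \<beta> (t - \<tau>)^(-\<beta> - 1) |g t - g \<tau>|^2 of the derivative is
  nonnegative.\<close>

lemma powr_mult_norm_diff_sq_le: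
  fixes g G :: "real \<Rightarrow> 'a::real_inner"
  assumes "0 \<le> \<beta>" and "\<beta> < 2" and "0 \<le> t"
    and g: "\<And>\<tau>. \<tau> \<in> {0..t} \<Longrightarrow> (g has_vector_derivative G \<tau>) (at \<tau> within {0..t})"
    and G: "continuous_on {0..t} G"
    and I: "((\<lambda>\<tau>. (t - \<tau>) powr (-\<beta>) * (2 * inner (G \<tau>) (g t - g \<tau>))) has_integral I) {0..t}"
  shows "t powr (-\<beta>) * (norm (g t - g 0))\<^sup>2 \<le> I"
proof -
  obtain M where M: "\<And>\<tau>. \<tau> \<in> {0..t} \<Longrightarrow> norm (G \<tau>) \<le> M"
    using compact_imp_bounded[OF compact_continuous_image[OF G compact_Icc]]
    unfolding bounded_iff by (metis atLeastAtMost_iff image_eqI)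
  define \<Psi> where "\<Psi> \<tau> = (t - \<tau>) powr (-\<beta>) * (norm (g t - g \<tau>))\<^sup>2" for \<tau>
  define \<Psi>' where "\<Psi>' \<tau> = \<beta> * (t - \<tau>) powr (-\<beta> - 1) * (norm (g t - g \<tau>))\<^sup>2
                          - (t - \<tau>) powr (-\<beta>) * (2 * inner (G \<tau>) (g t - g \<tau>))" for \<tau>
  have "continuous_on {0..t} \<Psi>"
    unfolding \<Psi>_def
  proof (rule continuous_on_powr_mult_norm_diff_sq[OF \<open>\<beta> < 2\<close> continuous_on_vector_derivative[OF g]])
    show "norm (g t - g \<tau>) \<le> M * (t - \<tau>)" if "\<tau> \<in> {0..t}" for \<tau>
      using norm_diff_le_of_vector_derivative_bound[OF g M, of t \<tau>] that by auto
  qed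
  moreover have "(\<Psi> has_vector_derivative \<Psi>' \<tau>) (at \<tau>)" if "\<tau> \<in> {0<..<t}" for \<tau>
  proof -
    have "(g has_vector_derivative G \<tau>) (at \<tau>)"
      using g[of \<tau>] that at_within_Icc_at[of 0 \<tau> t] by auto
    then have "((\<lambda>x. (norm (g t - g x))\<^sup>2) has_real_derivative 2 * inner (- G \<tau>) (g t - g \<tau>)) (at \<tau>)"
      by (intro has_real_derivative_power2_norm derivative_eq_intros) auto
    moreover have "((\<lambda>x. (t - x) powr (-\<beta>)) has_real_derivative \<beta> * (t - \<tau>) powr (-\<beta> - 1)) (at \<tau>)"
      using that by (auto intro!: derivative_eq_intros)
    ultimately have "(\<Psi> has_real_derivative \<Psi>' \<tau>) (at \<tau>)"
      unfolding \<Psi>_def[abs_def] \<Psi>'_def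
      by (rule DERIV_mult[rotated, THEN DERIV_cong]) (simp add: algebra_simps)
    then show ?thesis
      by (simp add: has_real_derivative_iff_has_vector_derivative)
  qed
  ultimately have "(\<Psi>' has_integral \<Psi> t - \<Psi> 0) {0..t}"
    using \<open>0 \<le> t\<close> by (intro fundamental_theorem_of_calculus_interior) auto
  from has_integral_add[OF this I]
  have "((\<lambda>\<tau>. \<beta> * (t - \<tau>) powr (-\<beta> - 1) * (norm (g t - g \<tau>))\<^sup>2) has_integral \<Psi> t - \<Psi> 0 + I) {0..t}"
    by (simp add: \<Psi>'_def)
  then have "0 \<le> \<Psi> t - \<Psi> 0 + I"
    by (rule has_integral_nonneg) (use \<open>0 \<le> \<beta>\<close> in auto)
  then show ?thesis
    by (simp add: \<Psi>_def)
qed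

lemma abel_integral_inner_lower_bound:
  fixes g G :: "real \<Rightarrow> 'a::{real_inner, complete_space}"
  assumes "0 \<le> \<beta>" and "\<beta> < 1" and t: "t \<in> {0..T}"
    and g: "\<And>\<tau>. \<tau> \<in> {0..T} \<Longrightarrow> (g has_vector_derivative G \<tau>) (at \<tau> within {0..T})"
    and G: "continuous_on {0..T} G"
  shows "abel_integral \<beta> (\<lambda>\<tau>. 2 * inner (G \<tau>) (g \<tau>)) t + t powr (-\<beta>) * (norm (g t - g 0))\<^sup>2
           \<le> 2 * inner (abel_integral \<beta> G t) (g t)"
proof -
  have sub: "{0..t} \<subseteq> {0..T}"
    using t by auto
  have g_t: "(g has_vector_derivative G \<tau>) (at \<tau> within {0..t})" if "\<tau> \<in> {0..t}" for \<tau>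
    using g[of \<tau>] that sub by (auto intro: has_vector_derivative_within_subset)
  have G_t: "continuous_on {0..t} G"
    using G sub by (rule continuous_on_subset)
  have "((\<lambda>\<tau>. (t - \<tau>) powr (-\<beta>) *\<^sub>R G \<tau>) has_integral abel_integral \<beta> G t) {0..t}"
    using \<open>\<beta> < 1\<close> t G_t by (intro has_integral_abel_integral) auto
  from has_integral_linear[OF this bounded_linear_inner_left[of "g t"]]
  have I_G: "((\<lambda>\<tau>. 2 * ((t - \<tau>) powr (-\<beta>) * inner (G \<tau>) (g t))) has_integral
               2 * inner (abel_integral \<beta> G t) (g t)) {0..t}"
    by (intro has_integral_mult_right) (simp add: o_def)
  have h': "continuous_on {0..t} (\<lambda>\<tau>. 2 * inner (G \<tau>) (g \<tau>))"
    using continuous_on_vector_derivative[OF g_t] G_t by (intro continuous_intros)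
  have I_h': "((\<lambda>\<tau>. (t - \<tau>) powr (-\<beta>) * (2 * inner (G \<tau>) (g \<tau>))) has_integral
                     abel_integral \<beta> (\<lambda>\<tau>. 2 * inner (G \<tau>) (g \<tau>)) t) {0..t}"
    using has_integral_abel_integral[OF \<open>\<beta> < 1\<close> _ h'] t by simp
  from has_integral_diff[OF I_G I_h']
  have "((\<lambda>\<tau>. (t - \<tau>) powr (-\<beta>) * (2 * inner (G \<tau>) (g t - g \<tau>))) has_integral
                     2 * inner (abel_integral \<beta> G t) (g t) - abel_integral \<beta> (\<lambda>\<tau>. 2 * inner (G \<tau>) (g \<tau>)) t) {0..t}"
    by (simp add: inner_diff_right algebra_simps)
  from powr_mult_norm_diff_sq_le[OF \<open>0 \<le> \<beta>\<close> _ _ g_t G_t this]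
  show ?thesis
    using \<open>\<beta> < 1\<close> t by simp
qed

section \<open>Integration over [0, T]\<close>

lemma has_integral_powr_mult_norm_diff_sq:
  fixes g :: "real \<Rightarrow> 'a::real_inner"
  assumes "\<beta> < 1" and "0 \<le> T" and g: "continuous_on {0..T} g"
  shows "((\<lambda>t. t powr (-\<beta>) * (norm (g t - g 0))\<^sup>2) has_integral
           integral {0..T} (\<lambda>t. t powr (-\<beta>) * (norm (g t))\<^sup>2)
           - 2 * integral {0..T} (\<lambda>t. t powr (-\<beta>) * inner (g 0) (g t))
           + (norm (g 0))\<^sup>2 * (T powr (1 - \<beta>) / (1 - \<beta>))) {0..T}"
proof -
  have kernel: "((\<lambda>t. t powr (-\<beta>)) has_integral T powr (1 - \<beta>) / (1 - \<beta>)) {0..T}"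
    using has_integral_powr_from_0[of "-\<beta>" T] assms by (simp add: add.commute)
  have weighted: "(\<lambda>t. t powr (-\<beta>) * f t) integrable_on {0..T}" if "continuous_on {0..T} f" for f
    using integrable_on_powr_mult_continuous[OF \<open>\<beta> < 1\<close> \<open>0 \<le> T\<close> that] by simp
  have "((\<lambda>t. t powr (-\<beta>) * (norm (g t))\<^sup>2 - 2 * (t powr (-\<beta>) * inner (g 0) (g t))
                        + (norm (g 0))\<^sup>2 * t powr (-\<beta>)) has_integral
                     integral {0..T} (\<lambda>t. t powr (-\<beta>) * (norm (g t))\<^sup>2)
                     - 2 * integral {0..T} (\<lambda>t. t powr (-\<beta>) * inner (g 0) (g t))
                     + (norm (g 0))\<^sup>2 * (T powr (1 - \<beta>) / (1 - \<beta>))) {0..T}"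
    using g by (intro has_integral_add has_integral_diff has_integral_mult_right kernel
        integrable_integral weighted) (auto intro!: continuous_intros)
  moreover have "t powr (-\<beta>) * (norm (g t - g 0))\<^sup>2
                   = t powr (-\<beta>) * (norm (g t))\<^sup>2 - 2 * (t powr (-\<beta>) * inner (g 0) (g t))
                     + (norm (g 0))\<^sup>2 * t powr (-\<beta>)" for t
    by (simp add: power2_norm_eq_inner inner_diff_left inner_diff_right inner_commute algebra_simps)
  ultimately show ?thesis
    by presburger
qed

lemma integral_inner_abel_integral_lower_bound:
  fixes g G :: "real \<Rightarrow> 'a::{real_inner, complete_space}"
  assumes "0 \<le> \<beta>" and "\<beta> < 1" and "0 \<le> T"
    and g: "\<And>\<tau>. \<tau> \<in> {0..T} \<Longrightarrow> (g has_vector_derivative G \<tau>) (at \<tau> within {0..T})"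
    and G: "continuous_on {0..T} G"
  shows "integral {0..T} (\<lambda>t. ((T - t) powr (-\<beta>) + t powr (-\<beta>)) * (norm (g t))\<^sup>2)
           - 2 * integral {0..T} (\<lambda>t. t powr (-\<beta>) * inner (g 0) (g t))
         \<le> 2 * integral {0..T} (\<lambda>t. inner (abel_integral \<beta> G t) (g t))"
proof -
  define h where "h t = (norm (g t))\<^sup>2" for t
  define h' where "h' t = 2 * inner (G t) (g t)" for t
  have cg: "continuous_on {0..T} g"
    using g by (rule continuous_on_vector_derivative)
  have h: "(h has_real_derivative h' \<tau>) (at \<tau> within {0..T})" if "\<tau> \<in> {0..T}" for \<tau>
    unfolding h_def h'_def using has_real_derivative_power2_norm[OF g[OF that]] by (simp add: inner_commute)
  have "continuous_on {0..T} h'"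
    unfolding h'_def using cg G by (intro continuous_intros)
  note I_h' = abel_integral_deriv_has_integral[OF \<open>\<beta> < 1\<close> \<open>0 \<le> T\<close> h this]
  note I_incr = has_integral_powr_mult_norm_diff_sq[OF \<open>\<beta> < 1\<close> \<open>0 \<le> T\<close> cg]
  have "continuous_on {0..T} (\<lambda>t. inner (abel_integral \<beta> G t) (g t))"
    using continuous_on_abel_integral[OF \<open>\<beta> < 1\<close> G] cg by (intro continuous_intros)
  then have I_inner: "((\<lambda>t. 2 * inner (abel_integral \<beta> G t) (g t)) has_integral
                        2 * integral {0..T} (\<lambda>t. inner (abel_integral \<beta> G t) (g t))) {0..T}"
    by (intro has_integral_mult_right integrable_integral integrable_continuous_real)
  from has_integral_le[OF has_integral_add[OF I_h' I_incr] I_inner]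
  have "abel_integral \<beta> h T + integral {0..T} (\<lambda>t. t powr (-\<beta>) * h t)
          - 2 * integral {0..T} (\<lambda>t. t powr (-\<beta>) * inner (g 0) (g t))
        \<le> 2 * integral {0..T} (\<lambda>t. inner (abel_integral \<beta> G t) (g t))"
    using abel_integral_inner_lower_bound[OF \<open>0 \<le> \<beta>\<close> \<open>\<beta> < 1\<close> _ g G]
    by (simp add: h_def h'_def[abs_def])
  moreover have "((\<lambda>t. ((T - t) powr (-\<beta>) + t powr (-\<beta>)) * h t) has_integral
                   abel_integral \<beta> h T + integral {0..T} (\<lambda>t. t powr (-\<beta>) * h t)) {0..T}"
  proof -
    have "continuous_on {0..T} h"
      unfolding h_def using cg by (intro continuous_intros)
    then show ?thesis
      unfolding distrib_right
      using has_integral_abel_integral[OF \<open>\<beta> < 1\<close> \<open>0 \<le> T\<close>, of h]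
        integrable_on_powr_mult_continuous[OF \<open>\<beta> < 1\<close> \<open>0 \<le> T\<close>, of h]
      by (intro has_integral_add integrable_integral) simp_all
  qed
  ultimately show ?thesis
    by (simp add: h_def integral_unique)
qed

lemma convex_on_powr_neg:
  assumes "0 \<le> \<beta>"
  shows "convex_on {0<..} (\<lambda>x::real. x powr (-\<beta>))"
proof (rule f''_ge0_imp_convex[where f' = "\<lambda>x. -\<beta> * x powr (-\<beta> - 1)"
      and f'' = "\<lambda>x. \<beta> * (\<beta> + 1) * x powr (-\<beta> - 2)"])
  fix x :: real assume "x \<in> {0<..}"
  then show "((\<lambda>x. x powr (-\<beta>)) has_real_derivative -\<beta> * x powr (-\<beta> - 1)) (at x)"
    and "((\<lambda>x. -\<beta> * x powr (-\<beta> - 1)) has_real_derivative \<beta> * (\<beta> + 1) * x powr (-\<beta> - 2)) (at x)"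
    by (auto intro!: derivative_eq_intros simp: algebra_simps)
  show "0 \<le> \<beta> * (\<beta> + 1) * x powr (-\<beta> - 2)"
    using assms by simp
qed simp

lemma integral_powr_kernels_lower_bound:
  fixes h :: "real \<Rightarrow> real"
  assumes "0 \<le> \<beta>" and "\<beta> < 1" and "0 \<le> T"
    and h: "continuous_on {0..T} h" and h_nonneg: "\<And>t. t \<in> {0..T} \<Longrightarrow> 0 \<le> h t"
  shows "(T / 2) powr (-\<beta>) * integral {0..T} h
           \<le> (1/2) * integral {0..T} (\<lambda>t. ((T - t) powr (-\<beta>) + t powr (-\<beta>)) * h t)"
proof -
  have "(\<lambda>t. ((T - t) powr (-\<beta>) + t powr (-\<beta>)) * h t) integrable_on {0..T}"
    using has_integral_abel_integral[OF \<open>\<beta> < 1\<close> \<open>0 \<le> T\<close> h]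
      integrable_on_powr_mult_continuous[OF \<open>\<beta> < 1\<close> \<open>0 \<le> T\<close> h]
    by (auto simp: distrib_right intro: integrable_add)
  then have "integral {0<..<T} (\<lambda>t. (T / 2) powr (-\<beta>) * h t)
               \<le> integral {0<..<T} (\<lambda>t. (1/2) * (((T - t) powr (-\<beta>) + t powr (-\<beta>)) * h t))"
  proof (intro integral_le)
    fix t assume t: "t \<in> {0<..<T}"
    have "((1 - 1/2) *\<^sub>R (T - t) + (1/2) *\<^sub>R t) powr (-\<beta>) \<le> (1 - 1/2) * (T - t) powr (-\<beta>) + (1/2) * t powr (-\<beta>)"
      using t by (intro convex_onD[OF convex_on_powr_neg[OF \<open>0 \<le> \<beta>\<close>]]) auto
    then have "(T / 2) powr (-\<beta>) \<le> (1/2) * ((T - t) powr (-\<beta>) + t powr (-\<beta>))"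
      by (simp add: field_simps)
    then have "(T / 2) powr (-\<beta>) * h t \<le> ((1/2) * ((T - t) powr (-\<beta>) + t powr (-\<beta>))) * h t"
      using h_nonneg[of t] t by (intro mult_right_mono) auto
    then show "(T / 2) powr (-\<beta>) * h t \<le> (1/2) * (((T - t) powr (-\<beta>) + t powr (-\<beta>)) * h t)"
      by (simp only: mult.assoc)
  qed (use h in \<open>auto simp: integrable_on_open_interval_real intro!: integrable_continuous_real continuous_intros\<close>)
  then show ?thesis
    by (simp add: integral_open_interval_real)
qed

theorem lemma4p1:
  fixes g :: "real \<Rightarrow> 'a::{real_inner, complete_space}"
    and T \<beta> :: real
  assumes "T > 0" and "0 < \<beta>" and "\<beta> < 1"
    and "C1_on {0..T} g"
  shows "integral {0..T} (\<lambda>t. inner (caputo \<beta> g t) (g t))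
           \<ge> (1/2) / Gamma (1 - \<beta>) *
               integral {0..T} (\<lambda>t. ((T - t) powr (-\<beta>) + t powr (-\<beta>)) * (norm (g t))\<^sup>2)
             - 1 / Gamma (1 - \<beta>) * integral {0..T} (\<lambda>t. t powr (-\<beta>) * inner (g 0) (g t))
         \<and> (1/2) / Gamma (1 - \<beta>) *
               integral {0..T} (\<lambda>t. ((T - t) powr (-\<beta>) + t powr (-\<beta>)) * (norm (g t))\<^sup>2)
             - 1 / Gamma (1 - \<beta>) * integral {0..T} (\<lambda>t. t powr (-\<beta>) * inner (g 0) (g t))
           \<ge> (T / 2) powr (-\<beta>) / Gamma (1 - \<beta>) * integral {0..T} (\<lambda>t. (norm (g t))\<^sup>2)
             - 1 / Gamma (1 - \<beta>) * integral {0..T} (\<lambda>t. t powr (-\<beta>) * inner (g 0) (g t))"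
proof -
  obtain G where g: "\<And>t. t \<in> {0..T} \<Longrightarrow> (g has_vector_derivative G t) (at t within {0..T})"
    and G: "continuous_on {0..T} G"
    using assms(4) unfolding C1_on_def by blast
  define \<Gamma> where "\<Gamma> = Gamma (1 - \<beta>)"
  define K where "K = integral {0..T} (\<lambda>t. ((T - t) powr (-\<beta>) + t powr (-\<beta>)) * (norm (g t))\<^sup>2)"
  define C where "C = integral {0..T} (\<lambda>t. t powr (-\<beta>) * inner (g 0) (g t))"
  define L where "L = integral {0..T} (\<lambda>t. inner (abel_integral \<beta> G t) (g t))"
  have "0 < \<Gamma>"
    using \<open>\<beta> < 1\<close> by (simp add: \<Gamma>_def)
  have "integral {0..T} (\<lambda>t. inner (caputo \<beta> g t) (g t))
          = integral {0..T} (\<lambda>t. (1 / \<Gamma>) * inner (abel_integral \<beta> G t) (g t))"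
    using caputo_eq_abel_integral[OF g] by (intro integral_cong) (simp add: \<Gamma>_def)
  then have "integral {0..T} (\<lambda>t. inner (caputo \<beta> g t) (g t)) = L / \<Gamma>"
    by (simp add: L_def)
  moreover have "K - 2 * C \<le> 2 * L"
    unfolding K_def C_def L_def using assms
    by (intro integral_inner_abel_integral_lower_bound[OF _ _ _ g G]) auto
  moreover have "(T / 2) powr (-\<beta>) * integral {0..T} (\<lambda>t. (norm (g t))\<^sup>2) \<le> (1/2) * K"
    unfolding K_def using assms continuous_on_vector_derivative[OF g]
    by (intro integral_powr_kernels_lower_bound) (auto intro!: continuous_intros)
  ultimately show ?thesis
    unfolding \<Gamma>_def[symmetric] K_def[symmetric] C_def[symmetric]
    using \<open>0 < \<Gamma>\<close> by (simp add: field_simps)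
qed

end
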